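(* Let $\mathcal{X}$ be a non-empty set, $\mathcal{B}\subseteq\mathcal{P}(\mathcal{X})\setminus\{\emptyset\}$ and $g\in\mathcal{G}_{\geq0}(\mathcal{X})$. If, for every non-negative rational $r$, the set $\{x\in\mathcal{X}\colon g(x)\geq r\}$ is a finite union of pairwise disjoint events in $\mathcal{B}\cup\{\mathcal{X},\emptyset\}$, then $g$ is $\mathcal{B}$-measurable.
   Context: $\mathcal{G}_{\geq0}(\mathcal{X})$ is the set of bounded non-negative real functions on $\mathcal{X}$; $\mathbb{I}_B$ is the indicator of $B$. A function $g\in\mathcal{G}_{\geq0}(\mathcal{X})$ is simple $\mathcal{B}$-measurable if there are $c_0\geq0$, $n\in\mathbb{N}\cup\{0\}$ and, for $k=1,\dots,n$, $c_k\geq0$ and $B_k\in\mathcal{B}$ with $g=c_0+\sum_{k=1}^nc_k\mathbb{I}_{B_k}$. A function $g\in\mathcal{G}_{\geq0}(\mathcal{X})$ is $\mathcal{B}$-measurable if there is a sequence $(g_n)_{n\in\mathbb{N}}$ of simple $\mathcal{B}$-measurable functions in $\mathcal{G}_{\geq0}(\mathcal{X})$ with $\lim_{n\to\infty}\sup_{x}|g(x)-g_n(x)|=0$. *)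

theory Defs
  imports "HOL-Analysis.Analysis"
begin

text \<open>Functions on the possibility space X are modelled as functions on the ambient type,
  considered only on X.\<close>

definition G_nonneg :: "'a set \<Rightarrow> ('a \<Rightarrow> real) \<Rightarrow> bool" where
  "G_nonneg X g \<longleftrightarrow> (\<forall>x\<in>X. 0 \<le> g x) \<and> (\<exists>M. \<forall>x\<in>X. g x \<le> M)"

definition simple_B_measurable :: "'a set \<Rightarrow> 'a set set \<Rightarrow> ('a \<Rightarrow> real) \<Rightarrow> bool" where
  "simple_B_measurable X \<B> g \<longleftrightarrow>
     (\<exists>c0 (n::nat) (c::nat \<Rightarrow> real) (Bs::nat \<Rightarrow> 'a set).
        0 \<le> c0 \<and> (\<forall>k\<in>{1..n}. 0 \<le> c k \<and> Bs k \<in> \<B>) \<and>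
        (\<forall>x\<in>X. g x = c0 + (\<Sum>k=1..n. c k * indicator (Bs k) x)))"

definition B_measurable :: "'a set \<Rightarrow> 'a set set \<Rightarrow> ('a \<Rightarrow> real) \<Rightarrow> bool" where
  "B_measurable X \<B> g \<longleftrightarrow> G_nonneg X g \<and>
     (\<exists>gs::nat \<Rightarrow> 'a \<Rightarrow> real.
        (\<forall>n. G_nonneg X (gs n) \<and> simple_B_measurable X \<B> (gs n)) \<and>
        (\<lambda>n. SUP x\<in>X. \<bar>g x - gs n x\<bar>) \<longlonglongrightarrow> 0)"

end

theory Submission
  imports Defs
begin

text \<open>The floor approximation \<open>\<lfloor>m g\<rfloor> / m\<close> of \<open>g\<close> lies within \<open>1/m\<close> of \<open>g\<close>, and it equals
  \<open>(1/m) \<Sum>\<^sub>k \<one>{g \<ge> k/m}\<close>, a finite sum of indicators of rational level sets. By hypothesis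
  each level set is a finite disjoint union of events, so its indicator is the sum of their
  indicators; hence every floor approximation is simple and \<open>g\<close> is their uniform limit.\<close>

lemma floor_eq_sum_indicator_le:
  fixes s :: real and N :: nat
  assumes "0 \<le> s" "s \<le> N"
  shows "of_int \<lfloor>s\<rfloor> = (\<Sum>k=1..N. if real k \<le> s then 1 else 0 :: real)"
proof -
  have "nat \<lfloor>s\<rfloor> \<le> N" "real (nat \<lfloor>s\<rfloor>) \<le> s"
    using assms by linarith+
  then have "{k \<in> {1..N}. real k \<le> s} = {1..nat \<lfloor>s\<rfloor>}"
    by (auto simp: le_nat_floor)
  then have "(\<Sum>k=1..N. if real k \<le> s then 1 else 0 :: real) = real (nat \<lfloor>s\<rfloor>)"
    by (simp add: sum.If_cases Int_def conj_commute)
  then show ?thesis using assms(1) by simp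
qed

lemma floor_mult_div_approx:
  fixes m t :: real assumes "0 < m"
  shows "0 \<le> t - of_int \<lfloor>m * t\<rfloor> / m" and "t - of_int \<lfloor>m * t\<rfloor> / m \<le> 1 / m"
proof -
  have "t - of_int \<lfloor>m * t\<rfloor> / m = (m * t - of_int \<lfloor>m * t\<rfloor>) / m"
    using assms by (simp add: diff_divide_distrib)
  moreover have "0 \<le> m * t - of_int \<lfloor>m * t\<rfloor>" "m * t - of_int \<lfloor>m * t\<rfloor> \<le> 1"
    by linarith+
  ultimately show "0 \<le> t - of_int \<lfloor>m * t\<rfloor> / m" "t - of_int \<lfloor>m * t\<rfloor> / m \<le> 1 / m"
    using assms by (simp_all add: divide_right_mono)
qed

lemma simple_B_measurable_iff_list:
  "simple_B_measurable X \<B> g \<longleftrightarrow>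
     (\<exists>c0 ps. 0 \<le> c0 \<and> (\<forall>(c, B)\<in>set ps. 0 \<le> c \<and> B \<in> \<B>) \<and>
        (\<forall>x\<in>X. g x = c0 + (\<Sum>(c, B)\<leftarrow>ps. c * indicator B x)))"
  (is "_ \<longleftrightarrow> (\<exists>c0 ps. ?list c0 ps)")
proof
  assume "simple_B_measurable X \<B> g"
  then obtain c0 and n :: nat and c Bs
    where "0 \<le> c0" and coeffs: "\<forall>k\<in>{1..n}. 0 \<le> c k \<and> Bs k \<in> \<B>"
    and g: "\<forall>x\<in>X. g x = c0 + (\<Sum>k=1..n. c k * indicator (Bs k) x)"
    unfolding simple_B_measurable_def by blast
  define ps where "ps = map (\<lambda>k. (c k, Bs k)) [1..<Suc n]"
  have "(\<Sum>k=1..n. f k) = (\<Sum>k\<leftarrow>[1..<Suc n]. f k)" for f :: "nat \<Rightarrow> real"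
    by (metis atLeastLessThanSuc_atLeastAtMost set_upt sum_set_upt_conv_sum_list_nat)
  then have "\<forall>x\<in>X. g x = c0 + (\<Sum>(c, B)\<leftarrow>ps. c * indicator B x)"
    using g unfolding ps_def by (simp only: map_map o_def prod.case)
  moreover have "\<forall>(c, B)\<in>set ps. 0 \<le> c \<and> B \<in> \<B>"
    using coeffs unfolding ps_def by (auto simp del: upt_Suc)
  ultimately show "\<exists>c0 ps. ?list c0 ps" using \<open>0 \<le> c0\<close> by blast
next
  assume "\<exists>c0 ps. ?list c0 ps"
  then obtain c0 ps where "0 \<le> c0" and ps: "\<forall>(c, B)\<in>set ps. 0 \<le> c \<and> B \<in> \<B>"
    and g: "\<forall>x\<in>X. g x = c0 + (\<Sum>(c, B)\<leftarrow>ps. c * indicator B x)"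
    by blast
  define c where "c k = fst (ps ! (k - 1))" for k
  define Bs where "Bs k = snd (ps ! (k - 1))" for k
  have "\<forall>k\<in>{1..length ps}. 0 \<le> c k \<and> Bs k \<in> \<B>"
  proof
    fix k assume "k \<in> {1..length ps}"
    then have "ps ! (k - 1) \<in> set ps" by auto
    with ps show "0 \<le> c k \<and> Bs k \<in> \<B>" by (auto simp: c_def Bs_def case_prod_beta)
  qed
  moreover have "\<forall>x\<in>X. g x = c0 + (\<Sum>k=1..length ps. c k * indicator (Bs k) x)"
    using g by (simp add: sum_list_sum_nth sum.atLeast1_atMost_eq atLeast0LessThan
        case_prod_beta c_def Bs_def)
  ultimately show "simple_B_measurable X \<B> g"
    unfolding simple_B_measurable_def using \<open>0 \<le> c0\<close> by blast
qed

lemma simple_B_measurable_cong: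
  assumes "simple_B_measurable X \<B> f" "\<And>x. x \<in> X \<Longrightarrow> f x = g x"
  shows "simple_B_measurable X \<B> g"
  using assms unfolding simple_B_measurable_def by metis

lemma simple_B_measurable_const:
  assumes "0 \<le> c" shows "simple_B_measurable X \<B> (\<lambda>x. c)"
  using assms unfolding simple_B_measurable_iff_list by (intro exI[of _ c] exI[of _ "[]"]) auto

lemma simple_B_measurable_add:
  assumes "simple_B_measurable X \<B> f" "simple_B_measurable X \<B> g"
  shows "simple_B_measurable X \<B> (\<lambda>x. f x + g x)"
proof -
  obtain c0 ps where "0 \<le> c0" "\<forall>(c, B)\<in>set ps. 0 \<le> c \<and> B \<in> \<B>"
    "\<forall>x\<in>X. f x = c0 + (\<Sum>(c, B)\<leftarrow>ps. c * indicator B x)"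
    using assms(1) unfolding simple_B_measurable_iff_list by blast
  moreover obtain d0 qs where "0 \<le> d0" "\<forall>(c, B)\<in>set qs. 0 \<le> c \<and> B \<in> \<B>"
    "\<forall>x\<in>X. g x = d0 + (\<Sum>(c, B)\<leftarrow>qs. c * indicator B x)"
    using assms(2) unfolding simple_B_measurable_iff_list by blast
  ultimately show ?thesis unfolding simple_B_measurable_iff_list
    by (intro exI[of _ "c0 + d0"] exI[of _ "ps @ qs"]) auto
qed

lemma simple_B_measurable_mult:
  assumes "simple_B_measurable X \<B> f" "0 \<le> a"
  shows "simple_B_measurable X \<B> (\<lambda>x. a * f x)"
proof -
  obtain c0 ps where "0 \<le> c0" "\<forall>(c, B)\<in>set ps. 0 \<le> c \<and> B \<in> \<B>"
    "\<forall>x\<in>X. f x = c0 + (\<Sum>(c, B)\<leftarrow>ps. c * indicator B x)"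
    using assms(1) unfolding simple_B_measurable_iff_list by blast
  with assms(2) show ?thesis unfolding simple_B_measurable_iff_list
    by (intro exI[of _ "a * c0"] exI[of _ "map (\<lambda>(c, B). (a * c, B)) ps"])
      (auto simp: sum_list_const_mult[symmetric] o_def case_prod_beta mult.assoc distrib_left)
qed

lemma simple_B_measurable_sum:
  assumes "\<And>i. i \<in> I \<Longrightarrow> simple_B_measurable X \<B> (f i)"
  shows "simple_B_measurable X \<B> (\<lambda>x. \<Sum>i\<in>I. f i x)"
  using assms
proof (induction I rule: infinite_finite_induct)
  case (insert i I)
  then show ?case by (simp add: simple_B_measurable_add)
qed (simp_all add: simple_B_measurable_const)

lemma simple_B_measurable_indicator:
  assumes "E \<in> \<B> \<union> {X, {}}"
  shows "simple_B_measurable X \<B> (indicator E)"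
proof -
  consider "E \<in> \<B>" | "E = X" | "E = {}" using assms by blast
  then show ?thesis
  proof cases
    case 1
    then show ?thesis unfolding simple_B_measurable_iff_list
      by (intro exI[of _ 0] exI[of _ "[(1, E)]"]) auto
  next
    case 2
    show ?thesis
      by (rule simple_B_measurable_cong[OF simple_B_measurable_const[of 1]]) (simp_all add: 2)
  next
    case 3
    show ?thesis
      by (rule simple_B_measurable_cong[OF simple_B_measurable_const[of 0]]) (simp_all add: 3)
  qed
qed

lemma simple_B_measurable_indicator_disjoint_Union:
  assumes "finite \<D>" "\<D> \<subseteq> \<B> \<union> {X, {}}" "disjoint \<D>"
  shows "simple_B_measurable X \<B> (indicator (\<Union>\<D>))"
proof -
  have "disjoint_family_on id \<D>"
    using assms(3) by (auto simp: disjoint_family_on_def pairwise_def disjnt_def)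
  then have "indicator (\<Union>\<D>) = (\<lambda>x. \<Sum>E\<in>\<D>. indicator E x :: real)"
    using indicator_UN_disjoint[OF assms(1), of id] by auto
  moreover have "simple_B_measurable X \<B> (\<lambda>x. \<Sum>E\<in>\<D>. indicator E x)"
    using assms(2) by (intro simple_B_measurable_sum simple_B_measurable_indicator) blast
  ultimately show ?thesis by simp
qed

lemma simple_B_measurable_floor_approx:
  fixes m M :: real
  assumes "0 < m" "m \<in> \<rat>" and g_bounds: "\<And>x. x \<in> X \<Longrightarrow> 0 \<le> g x \<and> g x \<le> M"
    and level_simple: "\<And>r. r \<in> \<rat> \<Longrightarrow> 0 \<le> r \<Longrightarrow>
      simple_B_measurable X \<B> (indicator {x\<in>X. g x \<ge> r})"
  shows "simple_B_measurable X \<B> (\<lambda>x. of_int \<lfloor>m * g x\<rfloor> / m)"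
proof (rule simple_B_measurable_cong)
  let ?N = "nat \<lceil>m * M\<rceil>"
  show "simple_B_measurable X \<B> (\<lambda>x. 1 / m * (\<Sum>k=1..?N. indicator {x\<in>X. g x \<ge> real k / m} x))"
    using assms(1,2) by (intro simple_B_measurable_mult simple_B_measurable_sum level_simple)
      (auto simp: Rats_divide)
  fix x assume "x \<in> X"
  then have "m * g x \<le> real ?N"
    using g_bounds assms(1) by (smt (verit) real_nat_ceiling_ge mult_left_mono)
  then have "of_int \<lfloor>m * g x\<rfloor> = (\<Sum>k=1..?N. if real k \<le> m * g x then 1 else 0 :: real)"
    using \<open>x \<in> X\<close> g_bounds assms(1) by (intro floor_eq_sum_indicator_le) auto
  also have "\<dots> = (\<Sum>k=1..?N. indicator {x\<in>X. g x \<ge> real k / m} x)"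
    using \<open>x \<in> X\<close> assms(1) by (intro sum.cong) (auto simp: indicator_def divide_le_eq mult.commute)
  finally show "1 / m * (\<Sum>k=1..?N. indicator {x\<in>X. g x \<ge> real k / m} x)
      = of_int \<lfloor>m * g x\<rfloor> / m"
    by simp
qed

lemma G_nonneg_floor_approx:
  fixes m :: real
  assumes "0 < m" "G_nonneg X g"
  shows "G_nonneg X (\<lambda>x. of_int \<lfloor>m * g x\<rfloor> / m)"
proof -
  obtain M where "\<forall>x\<in>X. 0 \<le> g x" "\<forall>x\<in>X. g x \<le> M"
    using assms(2) unfolding G_nonneg_def by blast
  moreover have "of_int \<lfloor>m * g x\<rfloor> / m \<le> g x" for x
    using floor_mult_div_approx(1)[OF assms(1), of "g x"] by simp
  ultimately show ?thesis
    unfolding G_nonneg_def using assms(1)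
    by (intro conjI ballI exI[of _ M]) (auto intro: divide_nonneg_pos order.trans)
qed

lemma B_measurable_of_uniform_approx:
  assumes "X \<noteq> {}" "G_nonneg X g"
    and "\<And>n. G_nonneg X (gs n)" "\<And>n. simple_B_measurable X \<B> (gs n)"
    and err: "\<And>n x. x \<in> X \<Longrightarrow> \<bar>g x - gs n x\<bar> \<le> e n" and "e \<longlonglongrightarrow> 0"
  shows "B_measurable X \<B> g"
proof -
  have "(SUP x\<in>X. \<bar>g x - gs n x\<bar>) \<le> e n" for n
    using err assms(1) by (intro cSUP_least) auto
  moreover have "0 \<le> (SUP x\<in>X. \<bar>g x - gs n x\<bar>)" for n
  proof -
    obtain x0 where "x0 \<in> X" using assms(1) by blast
    moreover have "bdd_above ((\<lambda>x. \<bar>g x - gs n x\<bar>) ` X)"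
      using err by (intro bdd_aboveI[of _ "e n"]) auto
    ultimately show ?thesis by (meson abs_ge_zero cSUP_upper2)
  qed
  ultimately have "(\<lambda>n. SUP x\<in>X. \<bar>g x - gs n x\<bar>) \<longlonglongrightarrow> 0"
    by (intro tendsto_sandwich[OF _ _ tendsto_const \<open>e \<longlonglongrightarrow> 0\<close>]) auto
  then show ?thesis unfolding B_measurable_def using assms(2-4) by blast
qed

theorem proposition4:
  fixes X :: "'a set" and \<B> :: "'a set set" and g :: "'a \<Rightarrow> real"
  assumes "X \<noteq> {}"
    and "\<B> \<subseteq> Pow X - {{}}"
    and "G_nonneg X g"
    and "\<forall>r\<in>\<rat>. 0 \<le> r \<longrightarrow>
           (\<exists>\<D>. finite \<D> \<and> \<D> \<subseteq> \<B> \<union> {X, {}} \<and> disjoint \<D> \<and>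
                 \<Union>\<D> = {x\<in>X. g x \<ge> r})"
  shows "B_measurable X \<B> g"
proof -
  obtain M where g_bounds: "\<And>x. x \<in> X \<Longrightarrow> 0 \<le> g x \<and> g x \<le> M"
    using assms(3) unfolding G_nonneg_def by blast
  have level_simple: "simple_B_measurable X \<B> (indicator {x\<in>X. g x \<ge> r})"
    if "r \<in> \<rat>" "0 \<le> r" for r
    using assms(4) that simple_B_measurable_indicator_disjoint_Union by metis
  define gs where "gs n x = of_int \<lfloor>real (Suc n) * g x\<rfloor> / real (Suc n)" for n x
  have "simple_B_measurable X \<B> (gs n)" for n
    unfolding gs_def using g_bounds level_simple
    by (intro simple_B_measurable_floor_approx) auto
  moreover have "G_nonneg X (gs n)" for n
    unfolding gs_def using assms(3) by (intro G_nonneg_floor_approx) auto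
  moreover have "\<bar>g x - gs n x\<bar> \<le> inverse (real (Suc n))" for n x
    using floor_mult_div_approx[of "real (Suc n)" "g x"] by (simp add: gs_def inverse_eq_divide)
  ultimately show ?thesis
    by (intro B_measurable_of_uniform_approx[OF assms(1,3) _ _ _ LIMSEQ_inverse_real_of_nat])
qed

end
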